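(* Let $A,B\in\mathbb{T}^{m\times n}$, with every column of $A$ and every row of $B$ containing at least one finite entry, and let $F=A^\sharp\circ B$, i.e. $F(x)=A^\sharp(B\odot x)$. Suppose there exists $v\in\mathbb{R}^n$ such that $F(v)=\rho(F)+v$. Then \[ R(F)\le (n-1)\bigl(|\rho(F)|+W\bigr). \]
   Context: $\mathbb{T}=\mathbb{R}\cup\{-\infty\}$. $(B\odot x)_i=\max_j(B_{ij}+x_j)$; $A^\sharp(y)_j=\min_i(-A_{ij}+y_i)$ with $(+\infty)+(-\infty)=+\infty$. A bias vector is $v\in\mathbb{R}^n$ with $F(v)=\lambda+v$ for some $\lambda\in\mathbb{R}$ (entrywise addition); this $\lambda=\rho(F)$ is unique. $\|x\|_H=\max_ix_i-\min_ix_i$, and $R(F)=\inf\{\|u\|_H: u\in\mathbb{R}^n,\ F(u)=\rho(F)+u\}$. $W=\max\{|A_{ij}-B_{ih}|: A_{ij}\ne-\infty,\ B_{ih}\ne-\infty,\ i\in[m],\ j,h\in[n]\}$. *)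

theory Defs
  imports "HOL-Library.Extended_Real"
begin

text \<open>Tropical semiring T = R \<union> {-\<infinity>} is modelled by ereal values different from \<infinity>.
  Matrices are functions nat \<Rightarrow> nat \<Rightarrow> ereal with row indices in {..<m}, column
  indices in {..<n}; vectors in R^n are functions nat \<Rightarrow> real (only indices < n matter).\<close>

definition maxplus_mult :: "(nat \<Rightarrow> nat \<Rightarrow> ereal) \<Rightarrow> nat \<Rightarrow> (nat \<Rightarrow> real) \<Rightarrow> nat \<Rightarrow> ereal" where
  "maxplus_mult B n x i = Max ((\<lambda>j. B i j + ereal (x j)) ` {..<n})"

text \<open>A sharp: (A^#(y))_j = min_i (-A_ij + y_i); ereal addition satisfies \<infinity> + -\<infinity> = \<infinity>.\<close>
definition sharp :: "(nat \<Rightarrow> nat \<Rightarrow> ereal) \<Rightarrow> nat \<Rightarrow> (nat \<Rightarrow> ereal) \<Rightarrow> nat \<Rightarrow> ereal" where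
  "sharp A m y j = Min ((\<lambda>i. - A i j + y i) ` {..<m})"

definition F_op :: "(nat \<Rightarrow> nat \<Rightarrow> ereal) \<Rightarrow> (nat \<Rightarrow> nat \<Rightarrow> ereal) \<Rightarrow> nat \<Rightarrow> nat \<Rightarrow> (nat \<Rightarrow> real) \<Rightarrow> nat \<Rightarrow> ereal" where
  "F_op A B m n x = sharp A m (maxplus_mult B n x)"

definition is_bias :: "(nat \<Rightarrow> nat \<Rightarrow> ereal) \<Rightarrow> (nat \<Rightarrow> nat \<Rightarrow> ereal) \<Rightarrow> nat \<Rightarrow> nat \<Rightarrow> real \<Rightarrow> (nat \<Rightarrow> real) \<Rightarrow> bool" where
  "is_bias A B m n lam v \<longleftrightarrow> (\<forall>j<n. F_op A B m n v j = ereal (lam + v j))"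

definition rho :: "(nat \<Rightarrow> nat \<Rightarrow> ereal) \<Rightarrow> (nat \<Rightarrow> nat \<Rightarrow> ereal) \<Rightarrow> nat \<Rightarrow> nat \<Rightarrow> real" where
  "rho A B m n = (THE lam. \<exists>v. is_bias A B m n lam v)"

definition hnorm :: "nat \<Rightarrow> (nat \<Rightarrow> real) \<Rightarrow> real" where
  "hnorm n x = Max (x ` {..<n}) - Min (x ` {..<n})"

definition R_F :: "(nat \<Rightarrow> nat \<Rightarrow> ereal) \<Rightarrow> (nat \<Rightarrow> nat \<Rightarrow> ereal) \<Rightarrow> nat \<Rightarrow> nat \<Rightarrow> real" where
  "R_F A B m n = Inf {hnorm n u | u. is_bias A B m n (rho A B m n) u}"

definition W_const :: "(nat \<Rightarrow> nat \<Rightarrow> ereal) \<Rightarrow> (nat \<Rightarrow> nat \<Rightarrow> ereal) \<Rightarrow> nat \<Rightarrow> nat \<Rightarrow> real" where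
  "W_const A B m n = Max {\<bar>real_of_ereal (A i j) - real_of_ereal (B i h)\<bar> | i j h.
       i < m \<and> j < n \<and> h < n \<and> A i j \<noteq> -\<infinity> \<and> B i h \<noteq> -\<infinity>}"

end

theory Submission
  imports Defs
begin

text \<open>Whether v is a bias vector for \<lambda> depends only on how each difference v h - v j
  compares with the thresholds \<lambda> + A i j - B i h, all of which lie in [-K, K] for
  K = |\<lambda>| + W. Hence any gap larger than K between consecutive entries of v can be
  shrunk to K by shifting all entries above it down, without destroying the bias
  property. After closing all such gaps the n entries of v span at most (n - 1) K.\<close>

definition bias_conditions ::
  "(nat \<Rightarrow> nat \<Rightarrow> ereal) \<Rightarrow> (nat \<Rightarrow> nat \<Rightarrow> ereal) \<Rightarrow> nat \<Rightarrow> nat \<Rightarrow> real \<Rightarrow> (nat \<Rightarrow> real) \<Rightarrow> bool"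
where
  "bias_conditions A B m n lam v \<longleftrightarrow> (\<forall>j<n.
     (\<forall>i<m. A i j \<noteq> -\<infinity> \<longrightarrow>
        (\<exists>h<n. B i h \<noteq> -\<infinity> \<and> lam + v j + real_of_ereal (A i j) \<le> real_of_ereal (B i h) + v h)) \<and>
     (\<exists>i<m. A i j \<noteq> -\<infinity> \<and>
        (\<forall>h<n. B i h \<noteq> -\<infinity> \<longrightarrow> real_of_ereal (B i h) + v h \<le> lam + v j + real_of_ereal (A i j))))"

definition differences_same_side :: "real \<Rightarrow> nat \<Rightarrow> (nat \<Rightarrow> real) \<Rightarrow> (nat \<Rightarrow> real) \<Rightarrow> bool" where
  "differences_same_side K n v u \<longleftrightarrow> (\<forall>j<n. \<forall>h<n. \<forall>\<beta>. \<bar>\<beta>\<bar> \<le> K \<longrightarrow>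
     (\<beta> \<le> v h - v j \<longrightarrow> \<beta> \<le> u h - u j) \<and> (v h - v j \<le> \<beta> \<longrightarrow> u h - u j \<le> \<beta>))"

definition large_gaps :: "real \<Rightarrow> nat \<Rightarrow> (nat \<Rightarrow> real) \<Rightarrow> (nat \<times> nat) set" where
  "large_gaps K n v = {p \<in> {..<n} \<times> {..<n}. K < v (snd p) - v (fst p)}"

lemma Min_image_eq_iff:
  fixes f :: "'a \<Rightarrow> 'b::linorder"
  assumes "finite I" "I \<noteq> {}"
  shows "Min (f ` I) = c \<longleftrightarrow> (\<forall>i\<in>I. c \<le> f i) \<and> (\<exists>i\<in>I. f i \<le> c)"
proof -
  have "Min (f ` I) = c \<longleftrightarrow> c \<le> Min (f ` I) \<and> Min (f ` I) \<le> c" by auto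
  then show ?thesis using assms by (simp add: Min_le_iff)
qed

lemma maxplus_mult_real:
  assumes "\<forall>h<n. B i h \<noteq> \<infinity>" "\<exists>h<n. B i h \<noteq> -\<infinity>"
  shows "\<exists>r. maxplus_mult B n v i = ereal r"
proof -
  let ?S = "(\<lambda>h. B i h + ereal (v h)) ` {..<n}"
  obtain h0 where h0: "h0 < n" "B i h0 \<noteq> -\<infinity>" using assms(2) by blast
  then have S: "finite ?S" "?S \<noteq> {}" by auto
  obtain h where "h < n" "Max ?S = B i h + ereal (v h)" using Max_in[OF S] by auto
  then have "Max ?S \<noteq> \<infinity>" using assms(1) by auto
  moreover have "B i h0 + ereal (v h0) \<le> Max ?S" using S h0 by (intro Max_ge) auto
  then have "Max ?S \<noteq> -\<infinity>" using h0 by (cases "B i h0") auto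
  ultimately show ?thesis unfolding maxplus_mult_def by (cases "Max ?S") auto
qed

lemma ereal_le_maxplus_mult_iff:
  assumes "n \<ge> 1" "\<forall>h<n. B i h \<noteq> \<infinity>"
  shows "ereal y \<le> maxplus_mult B n v i \<longleftrightarrow> (\<exists>h<n. B i h \<noteq> -\<infinity> \<and> y \<le> real_of_ereal (B i h) + v h)"
proof -
  have "ereal y \<le> B i h + ereal (v h) \<longleftrightarrow> B i h \<noteq> -\<infinity> \<and> y \<le> real_of_ereal (B i h) + v h"
    if "h < n" for h
    using assms(2) that by (cases "B i h") auto
  then show ?thesis
    using assms(1) by (auto simp: maxplus_mult_def Max_ge_iff lessThan_empty_iff)
qed

lemma maxplus_mult_le_ereal_iff:
  assumes "n \<ge> 1" "\<forall>h<n. B i h \<noteq> \<infinity>"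
  shows "maxplus_mult B n v i \<le> ereal y \<longleftrightarrow> (\<forall>h<n. B i h \<noteq> -\<infinity> \<longrightarrow> real_of_ereal (B i h) + v h \<le> y)"
proof -
  have "B i h + ereal (v h) \<le> ereal y \<longleftrightarrow> (B i h \<noteq> -\<infinity> \<longrightarrow> real_of_ereal (B i h) + v h \<le> y)"
    if "h < n" for h
    using assms(2) that by (cases "B i h") auto
  then show ?thesis
    using assms(1) by (auto simp: maxplus_mult_def lessThan_empty_iff)
qed

lemma ereal_le_uminus_plus_iff:
  assumes "a \<noteq> \<infinity>" "M = ereal r"
  shows "ereal x \<le> - a + M \<longleftrightarrow> (a \<noteq> -\<infinity> \<longrightarrow> ereal (x + real_of_ereal a) \<le> M)"
  using assms by (cases a) auto

lemma uminus_plus_le_ereal_iff: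
  assumes "a \<noteq> \<infinity>" "M = ereal r"
  shows "- a + M \<le> ereal x \<longleftrightarrow> a \<noteq> -\<infinity> \<and> M \<le> ereal (x + real_of_ereal a)"
  using assms by (cases a) auto

lemma is_bias_iff_bias_conditions:
  assumes "m \<ge> 1" "n \<ge> 1"
    and fin: "\<forall>i<m. \<forall>j<n. A i j \<noteq> \<infinity> \<and> B i j \<noteq> \<infinity>"
    and row: "\<forall>i<m. \<exists>j<n. B i j \<noteq> -\<infinity>"
  shows "is_bias A B m n lam v \<longleftrightarrow> bias_conditions A B m n lam v"
proof -
  have "ereal x \<le> - A i j + maxplus_mult B n v i \<longleftrightarrow> (A i j \<noteq> -\<infinity> \<longrightarrow>
          (\<exists>h<n. B i h \<noteq> -\<infinity> \<and> x + real_of_ereal (A i j) \<le> real_of_ereal (B i h) + v h))"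
    "- A i j + maxplus_mult B n v i \<le> ereal x \<longleftrightarrow> A i j \<noteq> -\<infinity> \<and>
          (\<forall>h<n. B i h \<noteq> -\<infinity> \<longrightarrow> real_of_ereal (B i h) + v h \<le> x + real_of_ereal (A i j))"
    if ij: "i < m" "j < n" for i j x
  proof -
    have B: "\<forall>h<n. B i h \<noteq> \<infinity>" using fin ij by auto
    obtain r where r: "maxplus_mult B n v i = ereal r"
      using maxplus_mult_real[of n B i v] B row ij by blast
    have A: "A i j \<noteq> \<infinity>" using fin ij by auto
    show "ereal x \<le> - A i j + maxplus_mult B n v i \<longleftrightarrow> (A i j \<noteq> -\<infinity> \<longrightarrow>
          (\<exists>h<n. B i h \<noteq> -\<infinity> \<and> x + real_of_ereal (A i j) \<le> real_of_ereal (B i h) + v h))"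
      by (simp add: ereal_le_uminus_plus_iff[OF A r] ereal_le_maxplus_mult_iff[of n B i, OF assms(2) B, symmetric])
    show "- A i j + maxplus_mult B n v i \<le> ereal x \<longleftrightarrow> A i j \<noteq> -\<infinity> \<and>
          (\<forall>h<n. B i h \<noteq> -\<infinity> \<longrightarrow> real_of_ereal (B i h) + v h \<le> x + real_of_ereal (A i j))"
      by (simp add: uminus_plus_le_ereal_iff[OF A r] maxplus_mult_le_ereal_iff[of n B i, OF assms(2) B, symmetric])
  qed
  moreover have "{..<m} \<noteq> {}" using assms(1) by (auto simp: lessThan_empty_iff)
  ultimately have "F_op A B m n v j = ereal (lam + v j) \<longleftrightarrow>
     (\<forall>i<m. A i j \<noteq> -\<infinity> \<longrightarrow>
        (\<exists>h<n. B i h \<noteq> -\<infinity> \<and> lam + v j + real_of_ereal (A i j) \<le> real_of_ereal (B i h) + v h)) \<and>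
     (\<exists>i<m. A i j \<noteq> -\<infinity> \<and>
        (\<forall>h<n. B i h \<noteq> -\<infinity> \<longrightarrow> real_of_ereal (B i h) + v h \<le> lam + v j + real_of_ereal (A i j)))"
    if "j < n" for j
    unfolding F_op_def sharp_def using that by (simp add: Min_image_eq_iff) blast
  then show ?thesis
    unfolding is_bias_def bias_conditions_def by blast
qed

lemma bias_conditions_eigenvalue_le:
  assumes "n \<ge> 1" "bias_conditions A B m n lam v" "bias_conditions A B m n mu w"
  shows "mu \<le> lam"
proof -
  let ?S = "(\<lambda>j. w j - v j) ` {..<n}"
  have S: "finite ?S" "?S \<noteq> {}" using assms(1) by (auto simp: lessThan_empty_iff)
  obtain j where j: "j < n" "Max ?S = w j - v j" using Max_in[OF S] by auto
  obtain i where i: "i < m" "A i j \<noteq> -\<infinity>"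
    "\<forall>h<n. B i h \<noteq> -\<infinity> \<longrightarrow> real_of_ereal (B i h) + v h \<le> lam + v j + real_of_ereal (A i j)"
    using assms(2) j(1) unfolding bias_conditions_def by blast
  obtain h where h: "h < n" "B i h \<noteq> -\<infinity>"
    "mu + w j + real_of_ereal (A i j) \<le> real_of_ereal (B i h) + w h"
    using assms(3) i j(1) unfolding bias_conditions_def by blast
  have "w h - v h \<le> w j - v j" using Max_ge[OF S(1), of "w h - v h"] h(1) j(2) by auto
  then show ?thesis using i(3) h by force
qed

lemma rho_eq:
  assumes "m \<ge> 1" "n \<ge> 1"
    and "\<forall>i<m. \<forall>j<n. A i j \<noteq> \<infinity> \<and> B i j \<noteq> \<infinity>"
    and "\<forall>i<m. \<exists>j<n. B i j \<noteq> -\<infinity>"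
    and bias: "is_bias A B m n lam v"
  shows "rho A B m n = lam"
  unfolding rho_def
proof (rule the_equality)
  show "\<exists>v. is_bias A B m n lam v" using bias by blast
  note iff = is_bias_iff_bias_conditions[OF assms(1-4)]
  fix mu assume "\<exists>w. is_bias A B m n mu w"
  then obtain w where "bias_conditions A B m n mu w" using iff by blast
  with bias show "mu = lam"
    using bias_conditions_eigenvalue_le[OF assms(2)] iff by (meson order.antisym)
qed

lemma bias_conditions_transfer:
  assumes bias: "bias_conditions A B m n lam v"
    and W: "\<forall>i<m. \<forall>j<n. \<forall>h<n. A i j \<noteq> -\<infinity> \<longrightarrow> B i h \<noteq> -\<infinity> \<longrightarrow>
              \<bar>real_of_ereal (A i j) - real_of_ereal (B i h)\<bar> \<le> W"
    and same: "differences_same_side (\<bar>lam\<bar> + W) n v u"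
  shows "bias_conditions A B m n lam u"
proof -
  have "(lam + v j + real_of_ereal (A i j) \<le> real_of_ereal (B i h) + v h \<longrightarrow>
         lam + u j + real_of_ereal (A i j) \<le> real_of_ereal (B i h) + u h) \<and>
        (real_of_ereal (B i h) + v h \<le> lam + v j + real_of_ereal (A i j) \<longrightarrow>
         real_of_ereal (B i h) + u h \<le> lam + u j + real_of_ereal (A i j))"
    if "i < m" "j < n" "h < n" "A i j \<noteq> -\<infinity>" "B i h \<noteq> -\<infinity>" for i j h
  proof -
    let ?\<beta> = "lam + real_of_ereal (A i j) - real_of_ereal (B i h)"
    have "\<bar>?\<beta>\<bar> \<le> \<bar>lam\<bar> + W" using W that by force
    then show ?thesis
      using same that(2,3) unfolding differences_same_side_def by fastforce
  qed
  with bias show ?thesis unfolding bias_conditions_def by meson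
qed

lemma differences_same_side_refl: "differences_same_side K n v v"
  unfolding differences_same_side_def by blast

lemma differences_same_side_trans:
  "differences_same_side K n v w \<Longrightarrow> differences_same_side K n w u \<Longrightarrow> differences_same_side K n v u"
  unfolding differences_same_side_def by meson

lemma large_gaps_subset:
  assumes "K \<ge> 0" "differences_same_side K n v u"
  shows "large_gaps K n u \<subseteq> large_gaps K n v"
proof -
  have "u h - u j \<le> K" if "j < n" "h < n" "v h - v j \<le> K" for j h
    using assms that unfolding differences_same_side_def by force
  then show ?thesis unfolding large_gaps_def by force
qed

lemma close_gap:
  fixes v :: "nat \<Rightarrow> real"
  assumes "K \<ge> 0" "j < n" "h < n" "K < v h - v j"
    and no_between: "\<forall>k<n. \<not> (v j < v k \<and> v k < v h)"
  shows "\<exists>u. differences_same_side K n v u \<and> large_gaps K n u \<subset> large_gaps K n v"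
proof -
  define u where "u k = (if v h \<le> v k then v k - (v h - v j - K) else v k)" for k
  have "differences_same_side K n v u"
    unfolding differences_same_side_def
  proof (intro allI impI)
    fix k l \<beta> assume "k < n" "l < n" "\<bar>\<beta>\<bar> \<le> K"
    moreover have "v k \<le> v j \<or> v h \<le> v k" "v l \<le> v j \<or> v h \<le> v l"
      using no_between \<open>k < n\<close> \<open>l < n\<close> by force+
    ultimately show "(\<beta> \<le> v l - v k \<longrightarrow> \<beta> \<le> u l - u k) \<and> (v l - v k \<le> \<beta> \<longrightarrow> u l - u k \<le> \<beta>)"
      using assms(4) unfolding u_def by auto
  qed
  moreover have "(j, h) \<in> large_gaps K n v - large_gaps K n u"
    using assms unfolding large_gaps_def u_def by auto
  ultimately show ?thesis using large_gaps_subset[OF assms(1)] by blast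
qed

lemma exists_next_value:
  fixes v :: "nat \<Rightarrow> real"
  assumes "h < n" "v j < v h"
  shows "\<exists>k<n. v j < v k \<and> (\<forall>l<n. v j < v l \<longrightarrow> v k \<le> v l)"
proof -
  let ?D = "v ` {l. l < n \<and> v j < v l}"
  have D: "finite ?D" "?D \<noteq> {}" using assms by auto
  obtain k where "k < n" "v j < v k" "Min ?D = v k" using Min_in[OF D] by auto
  then show ?thesis using Min_le[OF D(1)] by auto
qed

lemma Max_diff_le_card_greater_mult:
  fixes S :: "real set"
  assumes "finite S" "K \<ge> 0" "\<forall>x\<in>S. x < Max S \<longrightarrow> (\<exists>z\<in>S. x < z \<and> z \<le> x + K)"
  shows "x \<in> S \<Longrightarrow> Max S - x \<le> real (card {z\<in>S. x < z}) * K"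
proof (induction "card {z\<in>S. x < z}" arbitrary: x rule: less_induct)
  case less
  show ?case
  proof (cases "x = Max S")
    case True then show ?thesis using assms(2) by simp
  next
    case False
    with less.prems obtain z where z: "z \<in> S" "x < z" "z \<le> x + K"
      using assms(1,3) Max_ge order.not_eq_order_implies_strict by meson
    have "{y\<in>S. z < y} \<subset> {y\<in>S. x < y}" using z by auto
    then have lt: "card {y\<in>S. z < y} < card {y\<in>S. x < y}"
      using assms(1) by (simp add: psubset_card_mono)
    have "Max S - x \<le> real (card {y\<in>S. z < y}) * K + K"
      using less.hyps[OF lt z(1)] z(3) by linarith
    also have "\<dots> = (real (card {y\<in>S. z < y}) + 1) * K" by (simp add: algebra_simps)
    also have "\<dots> \<le> real (card {y\<in>S. x < y}) * K"
      using lt assms(2) by (intro mult_right_mono) auto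
    finally show ?thesis .
  qed
qed

lemma hnorm_le_if_small_gaps:
  fixes v :: "nat \<Rightarrow> real"
  assumes "n \<ge> 1" "K \<ge> 0"
    and small: "\<forall>j<n. \<forall>h<n. v j < v h \<longrightarrow> (\<exists>k<n. v j < v k \<and> v k \<le> v j + K)"
  shows "hnorm n v \<le> (real n - 1) * K"
proof -
  let ?S = "v ` {..<n}"
  have S: "finite ?S" "?S \<noteq> {}" using assms(1) by (auto simp: lessThan_empty_iff)
  have "\<forall>x\<in>?S. x < Max ?S \<longrightarrow> (\<exists>z\<in>?S. x < z \<and> z \<le> x + K)"
    using small Max_in[OF S] by fastforce
  then have "Max ?S - Min ?S \<le> real (card {z\<in>?S. Min ?S < z}) * K"
    using Max_diff_le_card_greater_mult[OF S(1) assms(2)] Min_in[OF S] by blast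
  also have "\<dots> \<le> (real n - 1) * K"
  proof -
    have "card {z\<in>?S. Min ?S < z} \<le> card (?S - {Min ?S})" using S(1) by (intro card_mono) auto
    also have "\<dots> \<le> n - 1" using Min_in[OF S] card_image_le[of "{..<n}" v] by simp
    finally show ?thesis using assms(1,2) by (intro mult_right_mono) auto
  qed
  finally show ?thesis unfolding hnorm_def .
qed

lemma compress_gaps:
  fixes v :: "nat \<Rightarrow> real"
  assumes "n \<ge> 1" "K \<ge> 0"
  shows "\<exists>u. differences_same_side K n v u \<and> hnorm n u \<le> (real n - 1) * K"
proof (induction "card (large_gaps K n v)" arbitrary: v rule: less_induct)
  case less
  show ?case
  proof (cases "\<forall>j<n. \<forall>h<n. v j < v h \<longrightarrow> (\<exists>k<n. v j < v k \<and> v k \<le> v j + K)")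
    case True
    then show ?thesis
      using differences_same_side_refl hnorm_le_if_small_gaps[OF assms] by blast
  next
    case False
    then obtain j h where "j < n" "h < n" "v j < v h"
      and far: "\<forall>k<n. v j < v k \<longrightarrow> K < v k - v j" by force
    then obtain k where k: "k < n" "v j < v k" "\<forall>l<n. v j < v l \<longrightarrow> v k \<le> v l"
      using exists_next_value by blast
    have "\<forall>l<n. \<not> (v j < v l \<and> v l < v k)" using k(3) by force
    then obtain w where w: "differences_same_side K n v w" "large_gaps K n w \<subset> large_gaps K n v"
      using close_gap[OF assms(2) \<open>j < n\<close> k(1)] far k(1,2) by blast
    have "finite (large_gaps K n v)" unfolding large_gaps_def by auto
    then have "card (large_gaps K n w) < card (large_gaps K n v)" using w(2) by (rule psubset_card_mono)
    then obtain u where "differences_same_side K n w u" "hnorm n u \<le> (real n - 1) * K"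
      using less.hyps by blast
    then show ?thesis using differences_same_side_trans w(1) by blast
  qed
qed

lemma abs_diff_le_W_const:
  assumes "i < m" "j < n" "h < n" "A i j \<noteq> -\<infinity>" "B i h \<noteq> -\<infinity>"
  shows "\<bar>real_of_ereal (A i j) - real_of_ereal (B i h)\<bar> \<le> W_const A B m n"
proof -
  let ?f = "\<lambda>(i, j, h). \<bar>real_of_ereal (A i j) - real_of_ereal (B i h)\<bar>"
  have "finite {\<bar>real_of_ereal (A i j) - real_of_ereal (B i h)\<bar> | i j h.
          i < m \<and> j < n \<and> h < n \<and> A i j \<noteq> -\<infinity> \<and> B i h \<noteq> -\<infinity>}"
    by (rule finite_subset[of _ "?f ` ({..<m} \<times> {..<n} \<times> {..<n})"]) force+
  then show ?thesis unfolding W_const_def using assms by (intro Max_ge) blast+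
qed

lemma hnorm_nonneg:
  assumes "n \<ge> 1"
  shows "0 \<le> hnorm n u"
proof -
  have S: "finite (u ` {..<n})" "u 0 \<in> u ` {..<n}" using assms by auto
  show ?thesis unfolding hnorm_def using Min_le[OF S] Max_ge[OF S] by linarith
qed

lemma R_F_le_hnorm:
  assumes "n \<ge> 1" "is_bias A B m n (rho A B m n) u"
  shows "R_F A B m n \<le> hnorm n u"
  unfolding R_F_def
proof (rule cInf_lower)
  show "hnorm n u \<in> {hnorm n u |u. is_bias A B m n (rho A B m n) u}" using assms(2) by blast
  show "bdd_below {hnorm n u |u. is_bias A B m n (rho A B m n) u}"
    using hnorm_nonneg[OF assms(1)] by (intro bdd_belowI[of _ 0]) auto
qed

theorem mainTheorem12:
  fixes A B :: "nat \<Rightarrow> nat \<Rightarrow> ereal" and m n :: nat and v :: "nat \<Rightarrow> real"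
  assumes "m \<ge> 1" and "n \<ge> 1"
    and "\<forall>i<m. \<forall>j<n. A i j \<noteq> \<infinity> \<and> B i j \<noteq> \<infinity>"
    and "\<forall>j<n. \<exists>i<m. A i j \<noteq> -\<infinity>"
    and "\<forall>i<m. \<exists>j<n. B i j \<noteq> -\<infinity>"
    and "\<exists>lam. is_bias A B m n lam v"
  shows "R_F A B m n \<le> (real n - 1) * (\<bar>rho A B m n\<bar> + W_const A B m n)"
proof -
  note iff = is_bias_iff_bias_conditions[OF assms(1,2,3,5)]
  obtain lam where bias: "is_bias A B m n lam v" using assms(6) by blast
  have rho: "rho A B m n = lam" using rho_eq[OF assms(1,2,3,5) bias] .
  have W: "\<forall>i<m. \<forall>j<n. \<forall>h<n. A i j \<noteq> -\<infinity> \<longrightarrow> B i h \<noteq> -\<infinity> \<longrightarrow>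
             \<bar>real_of_ereal (A i j) - real_of_ereal (B i h)\<bar> \<le> W_const A B m n"
    using abs_diff_le_W_const by blast
  obtain i h where "i < m" "A i 0 \<noteq> -\<infinity>" "h < n" "B i h \<noteq> -\<infinity>" using assms(2,4,5) by force
  then have "0 \<le> W_const A B m n" using W assms(2) by (fastforce intro: order_trans[OF abs_ge_zero])
  then obtain u where u: "differences_same_side (\<bar>lam\<bar> + W_const A B m n) n v u"
      "hnorm n u \<le> (real n - 1) * (\<bar>lam\<bar> + W_const A B m n)"
    using compress_gaps[OF assms(2)] by (meson abs_ge_zero add_nonneg_nonneg)
  have "bias_conditions A B m n lam v" using bias iff by blast
  then have "bias_conditions A B m n lam u" using W u(1) by (rule bias_conditions_transfer)
  then have "R_F A B m n \<le> hnorm n u" using R_F_le_hnorm[OF assms(2)] iff rho by simp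
  with u(2) show ?thesis unfolding rho by simp
qed

end
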